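(* Let $\Lambda$ be any of the logics $K$, $T$, $K4$, $K5$, $S4$, $S5$. A formula $\varphi$ of the language $\mathcal{L}^{+}$ is true at every world of every $\Lambda$-model if and only if $\varphi$ is derivable in the proof system $\Lambda+\mathrm{Ax}$ described below.
   Context: Fix a countable non-empty set $\mathit{At}$ of atoms. A literal is an atom or its negation; a clause is a finite set $D$ of literals read as $\bigvee D$ ($\bigvee\varnothing:=\bot$); it is tautological if it contains $p$ and $\lnot p$ for some $p$. For propositional $\pi$, $\mathcal{C}(\pi)$ is the (finite) set of non-tautological clauses $D$ with $\models\pi\to\bigvee D$ and no $D'\subsetneq D$ with $\models\pi\to\bigvee D'$. Language $\mathcal{L}^{+}$: formulas built from $\top$, atoms $p$, $\lnot$, $\land$, $\Box$, operators $[\ddagger\pi]$ for each propositional formula $\pi$, and operators $[D_1,D_2]_i$ for $i\in\{0,1,2\}$ and any finite non-tautological clauses $D_1,D_2$; other connectives defined as usual. Models: $\mathcal{M}=\langle W,R,V\rangle$, $W\neq\varnothing$, $R\subseteq W\times W$, $V:\mathit{At}\to\mathcal{P}(W)$, standard semantics for atoms, Booleans and $\Box$. For finite non-tautological clauses $D_1,D_2$, the model $\mathcal{M}^{(D_1,D_2)}=\langle W',R',V'\rangle$ has $W'=W\times\{0,1,2\}$, $(w,i)R'(v,j)$ iff $wRv$, $(w,0)\in V'(p)$ iff $w\in V(p)$, and for $i\in\{1,2\}$: $(w,i)\in V'(p)$ iff $\lnot p\in D_i$, or $\{p,\lnot p\}\cap D_i=\varnothing$ and $w\in V(p)$. Semantics: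 $\mathcal{M},w\models[D_1,D_2]_i\varphi$ iff $\mathcal{M}^{(D_1,D_2)},(w,i)\models\varphi$; $\mathcal{M},w\models[\ddagger\pi]\varphi$ iff for all $D_1\in\mathcal{C}(\pi)$ and $D_2\in\mathcal{C}(\lnot\pi)$, $\mathcal{M}^{(D_1,D_2)},(w,0)\models\varphi$. $\Lambda$-models: $K$: all models; $T$: reflexive $R$; $K4$: transitive; $K5$: euclidean; $S4$: reflexive and transitive; $S5$: equivalence relation. The proof system $\Lambda$ (over $\mathcal{L}^{+}$) consists of all instances in $\mathcal{L}^{+}$ of propositional tautologies, the distribution axiom $\Box(\varphi\to\psi)\to(\Box\varphi\to\Box\psi)$, modus ponens and necessitation (from $\varphi$ infer $\Box\varphi$), together with, as appropriate, $\Box\varphi\to\varphi$ (for $T,S4,S5$), $\Box\varphi\to\Box\Box\varphi$ (for $K4,S4,S5$) and $\lnot\Box\varphi\to\Box\lnot\Box\varphi$ (for $K5,S5$). $\mathrm{Ax}$ consists of the following, for all propositional $\pi$, all finite non-tautological clauses $D_1,D_2$, all atoms $p$, all formulas $\varphi,\psi$, and with $[\,\cdot\,]$ ranging over $[D_1,D_2]_0,[D_1,D_2]_1,[D_1,D_2]_2$: (1) $[\ddagger\pi]\varphi\leftrightarrow\bigwedge_{D_1\in\mathcal{C}(\pi)}\bigwedge_{D_2\in\mathcal{C}(\lnot\pi)}[D_1,D_2]_0\varphi$; (2) $[D_1,D_2]_0p\leftrightarrow p$; (3) for $j\in\{1,2\}$: $[D_1,D_2]_jp\leftrightarrow p$ if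 $\{p,\lnot p\}\cap D_j=\varnothing$; $[D_1,D_2]_jp\leftrightarrow\top$ if $\lnot p\in D_j$; $[D_1,D_2]_jp\leftrightarrow\bot$ if $p\in D_j$; (4) $[\,\cdot\,]\lnot\varphi\leftrightarrow\lnot[\,\cdot\,]\varphi$; (5) $[\,\cdot\,](\varphi\land\psi)\leftrightarrow([\,\cdot\,]\varphi\land[\,\cdot\,]\psi)$; (6) $[\,\cdot\,]\Box\varphi\leftrightarrow\Box([D_1,D_2]_0\varphi\land[D_1,D_2]_1\varphi\land[D_1,D_2]_2\varphi)$; (7) $[\,\cdot\,](\varphi\to\psi)\to([\,\cdot\,]\varphi\to[\,\cdot\,]\psi)$; (8) the rule: from $\vdash\varphi$ infer $\vdash[\,\cdot\,]\varphi$. *)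

theory Defs
  imports Main "HOL-Library.Countable"
begin

datatype 'a lit = Pos 'a | Neg 'a

datatype 'a pf = PTop | PAt 'a | PNeg "'a pf" | PAnd "'a pf" "'a pf"

text \<open>The language L+. FUpd D1 D2 i phi is [D1,D2]_i phi; FDag pi phi is [ddagger pi] phi.
  Clauses are sets of literals; well-formedness (finite, non-tautological, i in {0,1,2})
  is imposed by wf_fm.\<close>
datatype 'a fm = FTop | FAt 'a | FNeg "'a fm" | FAnd "'a fm" "'a fm" | FBox "'a fm"
  | FDag "'a pf" "'a fm" | FUpd "'a lit set" "'a lit set" nat "'a fm"

definition FBot :: "'a fm" where "FBot = FNeg FTop"
definition FImp :: "'a fm \<Rightarrow> 'a fm \<Rightarrow> 'a fm" where "FImp p q = FNeg (FAnd p (FNeg q))"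
definition FIff :: "'a fm \<Rightarrow> 'a fm \<Rightarrow> 'a fm" where "FIff p q = FAnd (FImp p q) (FImp q p)"

fun conj_list :: "'a fm list \<Rightarrow> 'a fm" where
  "conj_list [] = FTop"
| "conj_list [x] = x"
| "conj_list (x # xs) = FAnd x (conj_list xs)"

fun peval :: "('a \<Rightarrow> bool) \<Rightarrow> 'a pf \<Rightarrow> bool" where
  "peval v PTop = True"
| "peval v (PAt p) = v p"
| "peval v (PNeg a) = (\<not> peval v a)"
| "peval v (PAnd a b) = (peval v a \<and> peval v b)"

fun lit_true :: "('a \<Rightarrow> bool) \<Rightarrow> 'a lit \<Rightarrow> bool" where
  "lit_true v (Pos p) = v p"
| "lit_true v (Neg p) = (\<not> v p)"

definition clause_true :: "('a \<Rightarrow> bool) \<Rightarrow> 'a lit set \<Rightarrow> bool" where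
  "clause_true v D = (\<exists>l\<in>D. lit_true v l)"

definition taut_clause :: "'a lit set \<Rightarrow> bool" where
  "taut_clause D = (\<exists>p. Pos p \<in> D \<and> Neg p \<in> D)"

definition entails :: "'a pf \<Rightarrow> 'a lit set \<Rightarrow> bool" where
  "entails \<pi> D = (\<forall>v. peval v \<pi> \<longrightarrow> clause_true v D)"

definition Cl :: "'a pf \<Rightarrow> 'a lit set set" where
  "Cl \<pi> = {D. finite D \<and> \<not> taut_clause D \<and> entails \<pi> D \<and> \<not> (\<exists>D'. D' \<subset> D \<and> entails \<pi> D')}"

definition wf_clause :: "'a lit set \<Rightarrow> bool" where
  "wf_clause D = (finite D \<and> \<not> taut_clause D)"

fun wf_fm :: "'a fm \<Rightarrow> bool" where
  "wf_fm FTop = True"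
| "wf_fm (FAt p) = True"
| "wf_fm (FNeg a) = wf_fm a"
| "wf_fm (FAnd a b) = (wf_fm a \<and> wf_fm b)"
| "wf_fm (FBox a) = wf_fm a"
| "wf_fm (FDag \<pi> a) = wf_fm a"
| "wf_fm (FUpd D1 D2 i a) = (wf_clause D1 \<and> wf_clause D2 \<and> i \<le> 2 \<and> wf_fm a)"

type_synonym ('w, 'a) model = "'w set \<times> ('w \<times> 'w) set \<times> ('a \<Rightarrow> 'w set)"

definition is_model :: "('w, 'a) model \<Rightarrow> bool" where
  "is_model M = (case M of (W, R, V) \<Rightarrow> W \<noteq> {} \<and> R \<subseteq> W \<times> W \<and> (\<forall>p. V p \<subseteq> W))"

text \<open>Truth value of atom p at world (u,i) of M^(D1,D2), given its truth value b at u in M.\<close>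
definition upd_atom :: "'a lit set \<times> 'a lit set \<Rightarrow> nat \<Rightarrow> bool \<Rightarrow> 'a \<Rightarrow> bool" where
  "upd_atom d i b p = (if i = 0 then b else
     (let D = (if i = 1 then fst d else snd d) in
        Neg p \<in> D \<or> ({Pos p, Neg p} \<inter> D = {} \<and> b)))"

text \<open>The iterated model M^(ps!0)^(ps!1)...^(ps!(k-1)) has worlds (..((w,i_0),i_1)..,i_(k-1)),
  represented here as the pair (w, [i_0,...,i_(k-1)]).  atv gives the valuation there.\<close>
definition atv :: "('a \<Rightarrow> 'w set) \<Rightarrow> ('a lit set \<times> 'a lit set) list \<Rightarrow> 'w \<Rightarrow> nat list \<Rightarrow> 'a \<Rightarrow> bool" where
  "atv V ps w is p = foldl (\<lambda>b (d, i). upd_atom d i b p) (w \<in> V p) (zip ps is)"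

text \<open>sat M ps w is phi: phi holds in the iterated update model M^ps at world (w,is).\<close>
fun sat :: "('w, 'a) model \<Rightarrow> ('a lit set \<times> 'a lit set) list \<Rightarrow> 'w \<Rightarrow> nat list \<Rightarrow> 'a fm \<Rightarrow> bool" where
  "sat M ps w is FTop = True"
| "sat M ps w is (FAt p) = atv (snd (snd M)) ps w is p"
| "sat M ps w is (FNeg a) = (\<not> sat M ps w is a)"
| "sat M ps w is (FAnd a b) = (sat M ps w is a \<and> sat M ps w is b)"
| "sat M ps w is (FBox a) = (\<forall>v. (w, v) \<in> fst (snd M) \<longrightarrow>
      (\<forall>js. length js = length ps \<and> (\<forall>j\<in>set js. j \<le> 2) \<longrightarrow> sat M ps v js a))"
| "sat M ps w is (FUpd D1 D2 i a) = sat M (ps @ [(D1, D2)]) w (is @ [i]) a"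
| "sat M ps w is (FDag \<pi> a) =
     (\<forall>D1\<in>Cl \<pi>. \<forall>D2\<in>Cl (PNeg \<pi>). sat M (ps @ [(D1, D2)]) w (is @ [0]) a)"

definition sats :: "('w, 'a) model \<Rightarrow> 'w \<Rightarrow> 'a fm \<Rightarrow> bool" where
  "sats M w \<phi> = sat M [] w [] \<phi>"

datatype logic = LK | LT | LK4 | LK5 | LS4 | LS5

definition euclidean :: "('w \<times> 'w) set \<Rightarrow> bool" where
  "euclidean R = (\<forall>x y z. (x, y) \<in> R \<and> (x, z) \<in> R \<longrightarrow> (y, z) \<in> R)"

fun frame_cond :: "logic \<Rightarrow> 'w set \<Rightarrow> ('w \<times> 'w) set \<Rightarrow> bool" where
  "frame_cond LK W R = True"
| "frame_cond LT W R = refl_on W R"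
| "frame_cond LK4 W R = trans R"
| "frame_cond LK5 W R = euclidean R"
| "frame_cond LS4 W R = (refl_on W R \<and> trans R)"
| "frame_cond LS5 W R = equiv W R"

definition L_model :: "logic \<Rightarrow> ('w, 'a) model \<Rightarrow> bool" where
  "L_model L M = (is_model M \<and> frame_cond L (fst M) (fst (snd M)))"

definition valid :: "logic \<Rightarrow> 'w itself \<Rightarrow> 'a fm \<Rightarrow> bool" where
  "valid L (t :: 'w itself) \<phi> = (\<forall>M :: ('w, 'a) model. L_model L M \<longrightarrow> (\<forall>w\<in>fst M. sats M w \<phi>))"

text \<open>Boolean evaluation treating atoms, boxes and update-modalities as propositional variables;
  ptaut phi iff phi is an instance of a propositional tautology.\<close>
fun beval :: "('a fm \<Rightarrow> bool) \<Rightarrow> 'a fm \<Rightarrow> bool" where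
  "beval f FTop = True"
| "beval f (FNeg a) = (\<not> beval f a)"
| "beval f (FAnd a b) = (beval f a \<and> beval f b)"
| "beval f a = f a"

definition ptaut :: "'a fm \<Rightarrow> bool" where
  "ptaut \<phi> = (\<forall>f. beval f \<phi>)"

inductive derivable :: "logic \<Rightarrow> 'a fm \<Rightarrow> bool" for L :: logic where
  taut: "wf_fm \<phi> \<Longrightarrow> ptaut \<phi> \<Longrightarrow> derivable L \<phi>"
| distr: "wf_fm \<phi> \<Longrightarrow> wf_fm \<psi> \<Longrightarrow>
    derivable L (FImp (FBox (FImp \<phi> \<psi>)) (FImp (FBox \<phi>) (FBox \<psi>)))"
| mp: "derivable L (FImp \<phi> \<psi>) \<Longrightarrow> derivable L \<phi> \<Longrightarrow> derivable L \<psi>"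
| nec: "derivable L \<phi> \<Longrightarrow> derivable L (FBox \<phi>)"
| axT: "L \<in> {LT, LS4, LS5} \<Longrightarrow> wf_fm \<phi> \<Longrightarrow> derivable L (FImp (FBox \<phi>) \<phi>)"
| ax4: "L \<in> {LK4, LS4, LS5} \<Longrightarrow> wf_fm \<phi> \<Longrightarrow> derivable L (FImp (FBox \<phi>) (FBox (FBox \<phi>)))"
| ax5: "L \<in> {LK5, LS5} \<Longrightarrow> wf_fm \<phi> \<Longrightarrow>
    derivable L (FImp (FNeg (FBox \<phi>)) (FBox (FNeg (FBox \<phi>))))"
| ax1: "wf_fm \<phi> \<Longrightarrow> set Ds = Cl \<pi> \<times> Cl (PNeg \<pi>) \<Longrightarrow>
    derivable L (FIff (FDag \<pi> \<phi>) (conj_list (map (\<lambda>(D1, D2). FUpd D1 D2 0 \<phi>) Ds)))"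
| ax2: "wf_clause D1 \<Longrightarrow> wf_clause D2 \<Longrightarrow> derivable L (FIff (FUpd D1 D2 0 (FAt p)) (FAt p))"
| ax3a: "wf_clause D1 \<Longrightarrow> wf_clause D2 \<Longrightarrow> j \<in> {1, 2} \<Longrightarrow>
    {Pos p, Neg p} \<inter> (if j = 1 then D1 else D2) = {} \<Longrightarrow>
    derivable L (FIff (FUpd D1 D2 j (FAt p)) (FAt p))"
| ax3b: "wf_clause D1 \<Longrightarrow> wf_clause D2 \<Longrightarrow> j \<in> {1, 2} \<Longrightarrow>
    Neg p \<in> (if j = 1 then D1 else D2) \<Longrightarrow>
    derivable L (FIff (FUpd D1 D2 j (FAt p)) FTop)"
| ax3c: "wf_clause D1 \<Longrightarrow> wf_clause D2 \<Longrightarrow> j \<in> {1, 2} \<Longrightarrow>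
    Pos p \<in> (if j = 1 then D1 else D2) \<Longrightarrow>
    derivable L (FIff (FUpd D1 D2 j (FAt p)) FBot)"
| ax4neg: "wf_clause D1 \<Longrightarrow> wf_clause D2 \<Longrightarrow> i \<le> 2 \<Longrightarrow> wf_fm \<phi> \<Longrightarrow>
    derivable L (FIff (FUpd D1 D2 i (FNeg \<phi>)) (FNeg (FUpd D1 D2 i \<phi>)))"
| ax5and: "wf_clause D1 \<Longrightarrow> wf_clause D2 \<Longrightarrow> i \<le> 2 \<Longrightarrow> wf_fm \<phi> \<Longrightarrow> wf_fm \<psi> \<Longrightarrow>
    derivable L (FIff (FUpd D1 D2 i (FAnd \<phi> \<psi>)) (FAnd (FUpd D1 D2 i \<phi>) (FUpd D1 D2 i \<psi>)))"
| ax6box: "wf_clause D1 \<Longrightarrow> wf_clause D2 \<Longrightarrow> i \<le> 2 \<Longrightarrow> wf_fm \<phi> \<Longrightarrow>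
    derivable L (FIff (FUpd D1 D2 i (FBox \<phi>))
      (FBox (FAnd (FUpd D1 D2 0 \<phi>) (FAnd (FUpd D1 D2 1 \<phi>) (FUpd D1 D2 2 \<phi>)))))"
| ax7k: "wf_clause D1 \<Longrightarrow> wf_clause D2 \<Longrightarrow> i \<le> 2 \<Longrightarrow> wf_fm \<phi> \<Longrightarrow> wf_fm \<psi> \<Longrightarrow>
    derivable L (FImp (FUpd D1 D2 i (FImp \<phi> \<psi>)) (FImp (FUpd D1 D2 i \<phi>) (FUpd D1 D2 i \<psi>)))"
| ax8nec: "wf_clause D1 \<Longrightarrow> wf_clause D2 \<Longrightarrow> i \<le> 2 \<Longrightarrow> derivable L \<phi> \<Longrightarrow>
    derivable L (FUpd D1 D2 i \<phi>)"

end

theory Submission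
  imports Defs "HOL-Library.Countable_Set"
begin

text \<open>Soundness is checked axiom by axiom on the iterated update models that \<open>sat\<close> evaluates.
  For completeness, axioms (1)--(7) push every update operator inwards until it disappears at the
  atoms, so every well-formed formula is provably equivalent to a formula of the basic modal
  language, and by soundness the two are equally valid. A valid basic formula is derivable by the
  canonical model argument for \<open>\<Lambda>\<close>. It suffices to keep the countably many maximal consistent
  sets reachable from a given one by choosing witnesses for boxed formulas; this countable model
  can be pulled back onto the worlds of any infinite type.\<close>

lemma wf_FImp [simp]: "wf_fm (FImp a b) \<longleftrightarrow> wf_fm a \<and> wf_fm b"
  by (simp add: FImp_def)

lemma wf_FIff [simp]: "wf_fm (FIff a b) \<longleftrightarrow> wf_fm a \<and> wf_fm b"
  by (auto simp: FIff_def)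

lemma wf_FBot [simp]: "wf_fm FBot"
  by (simp add: FBot_def)

lemma wf_conj_list [simp]: "wf_fm (conj_list xs) \<longleftrightarrow> (\<forall>x\<in>set xs. wf_fm x)"
  by (induction xs rule: conj_list.induct) auto

lemma beval_connectives [simp]:
  "beval f (FImp a b) \<longleftrightarrow> (beval f a \<longrightarrow> beval f b)"
  "beval f (FIff a b) \<longleftrightarrow> (beval f a \<longleftrightarrow> beval f b)"
  "beval f FBot \<longleftrightarrow> False"
  by (auto simp: FImp_def FIff_def FBot_def)

lemma beval_conj_list [simp]: "beval f (conj_list xs) \<longleftrightarrow> (\<forall>x\<in>set xs. beval f x)"
  by (induction xs rule: conj_list.induct) auto

lemma wf_clause_if_Cl: "D \<in> Cl \<pi> \<Longrightarrow> wf_clause D"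
  by (simp add: Cl_def wf_clause_def)

lemma derivable_wf_fm: "derivable L \<phi> \<Longrightarrow> wf_fm \<phi>"
  by (induction rule: derivable.induct) (auto dest: wf_clause_if_Cl)

lemma derivable_ptaut_mp:
  "derivable L a \<Longrightarrow> wf_fm b \<Longrightarrow> ptaut (FImp a b) \<Longrightarrow> derivable L b"
  by (meson derivable.mp derivable.taut derivable_wf_fm wf_FImp)

lemma derivable_ptaut_mp2:
  "derivable L a \<Longrightarrow> derivable L b \<Longrightarrow> wf_fm c \<Longrightarrow> ptaut (FImp a (FImp b c)) \<Longrightarrow>
    derivable L c"
  by (meson derivable.mp derivable.taut derivable_wf_fm wf_FImp)

lemma derivable_ptaut_mp3:
  "derivable L a \<Longrightarrow> derivable L b \<Longrightarrow> derivable L c \<Longrightarrow> wf_fm d \<Longrightarrow>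
    ptaut (FImp a (FImp b (FImp c d))) \<Longrightarrow> derivable L d"
  by (meson derivable.mp derivable.taut derivable_wf_fm wf_FImp)

lemma derivable_FIff_refl: "wf_fm a \<Longrightarrow> derivable L (FIff a a)"
  by (rule derivable.taut) (auto simp: ptaut_def)

lemma derivable_FIff_trans:
  "derivable L (FIff a b) \<Longrightarrow> derivable L (FIff b c) \<Longrightarrow> derivable L (FIff a c)"
  by (rule derivable_ptaut_mp2[of L "FIff a b" "FIff b c"]) (auto simp: ptaut_def dest!: derivable_wf_fm)

lemma derivable_FIff_FNeg: "derivable L (FIff a b) \<Longrightarrow> derivable L (FIff (FNeg a) (FNeg b))"
  by (rule derivable_ptaut_mp[of L "FIff a b"]) (auto simp: ptaut_def dest!: derivable_wf_fm)

lemma derivable_FIff_FAnd: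
  "derivable L (FIff a b) \<Longrightarrow> derivable L (FIff c d) \<Longrightarrow>
    derivable L (FIff (FAnd a c) (FAnd b d))"
  by (rule derivable_ptaut_mp2[of L "FIff a b" "FIff c d"])
    (auto simp: ptaut_def dest!: derivable_wf_fm)

lemma derivable_FIff_conj_list:
  "(\<And>x. x \<in> set xs \<Longrightarrow> derivable L (FIff (f x) (g x))) \<Longrightarrow>
    derivable L (FIff (conj_list (map f xs)) (conj_list (map g xs)))"
  by (induction xs rule: induct_list012) (auto intro: derivable_FIff_refl derivable_FIff_FAnd)

lemma derivable_FIffD:
  assumes "derivable L (FIff a b)"
  shows "derivable L (FImp a b)" "derivable L (FImp b a)"
  using derivable_wf_fm[OF assms]
  by (auto intro!: derivable_ptaut_mp[OF assms] simp: ptaut_def)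

lemma derivable_FIff_cong: "derivable L (FIff a b) \<Longrightarrow> derivable L a \<longleftrightarrow> derivable L b"
  using derivable.mp derivable_FIffD by blast

lemma derivable_FIffI:
  "derivable L (FImp a b) \<Longrightarrow> derivable L (FImp b a) \<Longrightarrow> derivable L (FIff a b)"
  by (rule derivable_ptaut_mp2[of L "FImp a b" "FImp b a"])
    (auto simp: ptaut_def dest!: derivable_wf_fm)

lemma derivable_FImp_FBox: "derivable L (FImp a b) \<Longrightarrow> derivable L (FImp (FBox a) (FBox b))"
  by (metis derivable.distr derivable.mp derivable.nec derivable_wf_fm wf_FImp)

lemma derivable_FIff_FBox: "derivable L (FIff a b) \<Longrightarrow> derivable L (FIff (FBox a) (FBox b))"
  by (metis derivable_FImp_FBox derivable_FIffI derivable_FIffD)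

lemma derivable_FImp_FUpd:
  "wf_clause D1 \<Longrightarrow> wf_clause D2 \<Longrightarrow> i \<le> 2 \<Longrightarrow> derivable L (FImp a b) \<Longrightarrow>
    derivable L (FImp (FUpd D1 D2 i a) (FUpd D1 D2 i b))"
  by (metis derivable.ax7k derivable.ax8nec derivable.mp derivable_wf_fm wf_FImp)

lemma derivable_FIff_FUpd:
  "wf_clause D1 \<Longrightarrow> wf_clause D2 \<Longrightarrow> i \<le> 2 \<Longrightarrow> derivable L (FIff a b) \<Longrightarrow>
    derivable L (FIff (FUpd D1 D2 i a) (FUpd D1 D2 i b))"
  by (metis derivable_FImp_FUpd derivable_FIffI derivable_FIffD)

lemma derivable_conj_list_FBox:
  "\<forall>y\<in>set ys. wf_fm y \<Longrightarrow>
    derivable L (FImp (conj_list (map FBox ys)) (FBox (conj_list ys)))"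
proof (induction ys rule: induct_list012)
  case 1
  have "derivable L (FBox FTop)"
    by (intro derivable.nec derivable.taut) (auto simp: ptaut_def)
  then show ?case
    by (rule derivable_ptaut_mp) (auto simp: ptaut_def)
next
  case (2 y)
  then show ?case
    by (intro derivable.taut) (auto simp: ptaut_def)
next
  case (3 y z zs)
  let ?c = "conj_list (z # zs)"
  have IH: "derivable L (FImp (conj_list (map FBox (z # zs))) (FBox ?c))"
    using "3.IH"(2) "3.prems" by simp
  have box_y: "derivable L (FImp (FBox y) (FBox (FImp ?c (FAnd y ?c))))"
    using "3.prems" by (intro derivable_FImp_FBox derivable.taut) (auto simp: ptaut_def)
  have distr: "derivable L (FImp (FBox (FImp ?c (FAnd y ?c))) (FImp (FBox ?c) (FBox (FAnd y ?c))))"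
    using "3.prems" by (intro derivable.distr) auto
  show ?case
    by (rule derivable_ptaut_mp3[OF IH box_y distr]) (use "3.prems" in \<open>auto simp: ptaut_def\<close>)
qed

section \<open>Soundness\<close>

lemma sat_connectives [simp]:
  "sat M ps w ns (FImp a b) \<longleftrightarrow> (sat M ps w ns a \<longrightarrow> sat M ps w ns b)"
  "sat M ps w ns (FIff a b) \<longleftrightarrow> (sat M ps w ns a \<longleftrightarrow> sat M ps w ns b)"
  "sat M ps w ns FBot \<longleftrightarrow> False"
  by (auto simp: FImp_def FIff_def FBot_def)

lemma sat_conj_list [simp]: "sat M ps w ns (conj_list xs) \<longleftrightarrow> (\<forall>x\<in>set xs. sat M ps w ns x)"
  by (induction xs rule: conj_list.induct) auto

lemma beval_sat: "beval (sat M ps w ns) \<phi> = sat M ps w ns \<phi>"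
  by (induction \<phi>) auto

lemma atv_snoc:
  "length ns = length ps \<Longrightarrow> atv V (ps @ [d]) w (ns @ [i]) p = upd_atom d i (atv V ps w ns p) p"
  by (simp add: atv_def)

lemma all_index_lists_Suc:
  "(\<forall>js. length js = Suc n \<and> (\<forall>j\<in>set js. j \<le> (2::nat)) \<longrightarrow> P js) \<longleftrightarrow>
   (\<forall>js. length js = n \<and> (\<forall>j\<in>set js. j \<le> 2) \<longrightarrow> P (js @ [0]) \<and> P (js @ [1]) \<and> P (js @ [2]))"
  (is "?lhs \<longleftrightarrow> ?rhs")
proof
  show "?lhs \<Longrightarrow> ?rhs"
    by auto
next
  assume ?rhs
  show ?lhs
  proof (intro allI impI)
    fix js :: "nat list"
    assume "length js = Suc n \<and> (\<forall>j\<in>set js. j \<le> 2)"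
    then obtain ks k where js: "js = ks @ [k]" and ks: "length ks = n" "\<forall>j\<in>set ks. j \<le> 2"
      and "k \<le> 2"
      by (auto simp: length_Suc_conv_rev)
    from \<open>?rhs\<close> ks have "P (ks @ [0]) \<and> P (ks @ [1]) \<and> P (ks @ [2])"
      by blast
    moreover have "k = 0 \<or> k = 1 \<or> k = 2"
      using \<open>k \<le> 2\<close> by linarith
    ultimately show "P js"
      using js by auto
  qed
qed

lemma frame_cond_refl_on: "frame_cond L W R \<Longrightarrow> L \<in> {LT, LS4, LS5} \<Longrightarrow> refl_on W R"
  by (cases L) (simp_all add: equiv_def)

lemma frame_cond_trans: "frame_cond L W R \<Longrightarrow> L \<in> {LK4, LS4, LS5} \<Longrightarrow> trans R"
  by (cases L) (simp_all add: equiv_def)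

lemma euclidean_if_sym_trans: "sym R \<Longrightarrow> trans R \<Longrightarrow> euclidean R"
  unfolding euclidean_def by (meson symD transD)

lemma frame_cond_euclidean: "frame_cond L W R \<Longrightarrow> L \<in> {LK5, LS5} \<Longrightarrow> euclidean R"
  by (cases L) (simp_all add: equiv_def euclidean_if_sym_trans)

lemma sat_FUpd_FBox:
  "sat M ps w ns (FUpd D1 D2 i (FBox \<phi>)) \<longleftrightarrow>
    sat M ps w ns (FBox (FAnd (FUpd D1 D2 0 \<phi>) (FAnd (FUpd D1 D2 1 \<phi>) (FUpd D1 D2 2 \<phi>))))"
  by (simp only: sat.simps length_append_singleton all_index_lists_Suc)

lemma sat_FBox_FNeg_FBox_if_euclidean:
  assumes "euclidean (fst (snd M))" "\<not> sat M ps w ns (FBox \<phi>)"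
  shows "sat M ps w ns (FBox (FNeg (FBox \<phi>)))"
proof -
  obtain v ks where v: "(w, v) \<in> fst (snd M)" "length ks = length ps" "\<forall>j\<in>set ks. j \<le> 2"
    "\<not> sat M ps v ks \<phi>"
    using assms(2) by auto
  have "(u, v) \<in> fst (snd M)" if "(w, u) \<in> fst (snd M)" for u
    using assms(1) that v(1) unfolding euclidean_def by blast
  with v show ?thesis
    by auto
qed

theorem sat_if_derivable:
  assumes "derivable L \<phi>" "L_model L M"
  shows "w \<in> fst M \<Longrightarrow> length ns = length ps \<Longrightarrow> \<forall>j\<in>set ns. j \<le> 2 \<Longrightarrow> sat M ps w ns \<phi>"
  using assms(1)
proof (induction arbitrary: ps w ns)
  case (taut \<phi>)
  then show ?case
    by (metis ptaut_def beval_sat)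
next
  case (nec \<phi>)
  then show ?case
    using assms(2) by (auto simp: L_model_def is_model_def split: prod.splits)
next
  case (axT \<phi>)
  with assms(2) have "refl_on (fst M) (fst (snd M))"
    by (auto simp: L_model_def intro: frame_cond_refl_on)
  with axT.prems show ?case
    by (auto dest: refl_onD)
next
  case (ax4 \<phi>)
  with assms(2) have "trans (fst (snd M))"
    by (auto simp: L_model_def intro: frame_cond_trans)
  then show ?case
    by (simp add: trans_def)
next
  case (ax5 \<phi> ps w ns)
  with assms(2) have "euclidean (fst (snd M))"
    by (auto simp: L_model_def intro: frame_cond_euclidean)
  then have "sat M ps w ns (FBox (FNeg (FBox \<phi>)))" if "\<not> sat M ps w ns (FBox \<phi>)"
    using that by (rule sat_FBox_FNeg_FBox_if_euclidean)
  then show ?case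
    unfolding sat_connectives sat.simps(3) by (rule impI)
next
  case (ax6box D1 D2 i \<phi>)
  show ?case
    by (simp only: sat_connectives sat_FUpd_FBox)
qed (auto simp: atv_snoc upd_atom_def wf_clause_def taut_clause_def)

corollary valid_if_derivable: "derivable L \<phi> \<Longrightarrow> valid L TYPE('w) \<phi>"
  unfolding valid_def sats_def using sat_if_derivable by fastforce

fun patoms :: "'a pf \<Rightarrow> 'a set" where
  "patoms PTop = {}"
| "patoms (PAt p) = {p}"
| "patoms (PNeg a) = patoms a"
| "patoms (PAnd a b) = patoms a \<union> patoms b"

lemma finite_patoms: "finite (patoms \<pi>)"
  by (induction \<pi>) auto

lemma peval_cong: "(\<And>p. p \<in> patoms \<pi> \<Longrightarrow> v p = v' p) \<Longrightarrow> peval v \<pi> = peval v' \<pi>"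
  by (induction \<pi>) auto

fun lit_atom :: "'a lit \<Rightarrow> 'a" where
  "lit_atom (Pos p) = p"
| "lit_atom (Neg p) = p"

fun lit_sign :: "'a lit \<Rightarrow> bool" where
  "lit_sign (Pos p) = True"
| "lit_sign (Neg p) = False"

lemma lit_true_iff: "lit_true v l \<longleftrightarrow> v (lit_atom l) = lit_sign l"
  by (cases l) auto

lemma lit_eqI: "lit_atom l = lit_atom l' \<Longrightarrow> lit_sign l = lit_sign l' \<Longrightarrow> l = l'"
  by (cases l; cases l') auto

lemma taut_clauseI:
  "l \<in> D \<Longrightarrow> l' \<in> D \<Longrightarrow> lit_atom l = lit_atom l' \<Longrightarrow> lit_sign l \<noteq> lit_sign l' \<Longrightarrow> taut_clause D"
  unfolding taut_clause_def by (cases l; cases l') auto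

lemma entails_remove_lit:
  assumes "entails \<pi> D" "\<not> taut_clause D" "l \<in> D" "lit_atom l \<notin> patoms \<pi>"
  shows "entails \<pi> (D - {l})"
  unfolding entails_def
proof (intro allI impI)
  fix v
  assume "peval v \<pi>"
  \<comment> \<open>flipping the atom of \<open>l\<close> falsifies \<open>l\<close> but does not change the value of \<open>\<pi>\<close>\<close>
  define v' where "v' = v(lit_atom l := \<not> lit_sign l)"
  have "peval v' \<pi> = peval v \<pi>"
    by (rule peval_cong) (use assms(4) in \<open>auto simp: v'_def\<close>)
  with \<open>peval v \<pi>\<close> have "peval v' \<pi>"
    by simp
  then obtain l' where l': "l' \<in> D" "lit_true v' l'"
    using assms(1) by (auto simp: entails_def clause_true_def)
  moreover have "l' \<noteq> l"
    using l' by (auto simp: v'_def lit_true_iff)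
  ultimately have "lit_atom l' \<noteq> lit_atom l"
    using lit_eqI taut_clauseI[OF assms(3) l'(1)] assms(2) by metis
  with l' show "clause_true v (D - {l})"
    by (auto simp: clause_true_def lit_true_iff v'_def)
qed

lemma Cl_subset_lits: "D \<in> Cl \<pi> \<Longrightarrow> D \<subseteq> Pos ` patoms \<pi> \<union> Neg ` patoms \<pi>"
proof
  fix l
  assume D: "D \<in> Cl \<pi>" and "l \<in> D"
  have "lit_atom l \<in> patoms \<pi>"
  proof (rule ccontr)
    assume "lit_atom l \<notin> patoms \<pi>"
    with D \<open>l \<in> D\<close> have "entails \<pi> (D - {l})"
      by (intro entails_remove_lit) (auto simp: Cl_def)
    moreover have "D - {l} \<subset> D"
      using \<open>l \<in> D\<close> by auto
    ultimately show False
      using D by (auto simp: Cl_def)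
  qed
  then show "l \<in> Pos ` patoms \<pi> \<union> Neg ` patoms \<pi>"
    by (cases l) auto
qed

lemma finite_Cl: "finite (Cl \<pi>)"
proof (rule finite_subset)
  show "Cl \<pi> \<subseteq> Pow (Pos ` patoms \<pi> \<union> Neg ` patoms \<pi>)"
    using Cl_subset_lits by blast
qed (simp add: finite_patoms)

definition Cl_pairs :: "'a pf \<Rightarrow> ('a lit set \<times> 'a lit set) list" where
  "Cl_pairs \<pi> = (SOME Ds. set Ds = Cl \<pi> \<times> Cl (PNeg \<pi>))"

lemma set_Cl_pairs: "set (Cl_pairs \<pi>) = Cl \<pi> \<times> Cl (PNeg \<pi>)"
  unfolding Cl_pairs_def by (rule someI_ex) (simp add: finite_Cl finite_list)

section \<open>Reduction to the basic modal language\<close>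

fun basic :: "'a fm \<Rightarrow> bool" where
  "basic FTop = True"
| "basic (FAt p) = True"
| "basic (FNeg a) = basic a"
| "basic (FAnd a b) = (basic a \<and> basic b)"
| "basic (FBox a) = basic a"
| "basic (FDag \<pi> a) = False"
| "basic (FUpd D1 D2 i a) = False"

lemma basic_wf_fm: "basic \<phi> \<Longrightarrow> wf_fm \<phi>"
  by (induction \<phi>) auto

lemma basic_FImp [simp]: "basic (FImp a b) \<longleftrightarrow> basic a \<and> basic b"
  by (simp add: FImp_def)

lemma basic_FBot [simp]: "basic FBot"
  by (simp add: FBot_def)

lemma basic_conj_list [simp]: "basic (conj_list xs) \<longleftrightarrow> (\<forall>x\<in>set xs. basic x)"
  by (induction xs rule: conj_list.induct) auto

text \<open>\<open>upd_push D1 D2 i \<phi>\<close> is the formula that axioms (2)--(6) equate with \<open>[D1,D2]\<^sub>i \<phi>\<close>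
  for basic \<open>\<phi>\<close>; on update operators it returns a junk value.\<close>

fun upd_push :: "'a lit set \<Rightarrow> 'a lit set \<Rightarrow> nat \<Rightarrow> 'a fm \<Rightarrow> 'a fm" where
  "upd_push D1 D2 i FTop = FTop"
| "upd_push D1 D2 i (FAt p) =
    (if i = 0 then FAt p else
     (let D = (if i = 1 then D1 else D2) in
      if Neg p \<in> D then FTop else if Pos p \<in> D then FBot else FAt p))"
| "upd_push D1 D2 i (FNeg a) = FNeg (upd_push D1 D2 i a)"
| "upd_push D1 D2 i (FAnd a b) = FAnd (upd_push D1 D2 i a) (upd_push D1 D2 i b)"
| "upd_push D1 D2 i (FBox a) =
    FBox (FAnd (upd_push D1 D2 0 a) (FAnd (upd_push D1 D2 1 a) (upd_push D1 D2 2 a)))"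
| "upd_push D1 D2 i (FDag \<pi> a) = FTop"
| "upd_push D1 D2 i (FUpd D1' D2' j a) = FTop"

fun reduce :: "'a fm \<Rightarrow> 'a fm" where
  "reduce FTop = FTop"
| "reduce (FAt p) = FAt p"
| "reduce (FNeg a) = FNeg (reduce a)"
| "reduce (FAnd a b) = FAnd (reduce a) (reduce b)"
| "reduce (FBox a) = FBox (reduce a)"
| "reduce (FUpd D1 D2 i a) = upd_push D1 D2 i (reduce a)"
| "reduce (FDag \<pi> a) = conj_list (map (\<lambda>(D1, D2). upd_push D1 D2 0 (reduce a)) (Cl_pairs \<pi>))"

lemma basic_upd_push: "basic (upd_push D1 D2 i \<phi>)"
  by (induction \<phi> arbitrary: i) (auto simp: Let_def)

lemma basic_reduce: "basic (reduce \<phi>)"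
  by (induction \<phi>) (auto simp: basic_upd_push)

lemma derivable_FIff_upd_push_FAt:
  assumes "wf_clause D1" "wf_clause D2" "i \<le> 2"
  shows "derivable L (FIff (FUpd D1 D2 i (FAt p)) (upd_push D1 D2 i (FAt p)))"
proof -
  consider "i = 0" | "i \<in> {1, 2}"
    using assms(3) by fastforce
  then show ?thesis
  proof cases
    case 1
    then show ?thesis
      using assms by (simp add: derivable.ax2)
  next
    case 2
    then show ?thesis
      using assms derivable.ax3a[of D1 D2 i p L] derivable.ax3b[of D1 D2 i p L]
        derivable.ax3c[of D1 D2 i p L]
      by (auto simp: Let_def)
  qed
qed

lemma derivable_FIff_upd_push:
  assumes D: "wf_clause D1" "wf_clause D2"
  shows "basic \<chi> \<Longrightarrow> i \<le> 2 \<Longrightarrow> derivable L (FIff (FUpd D1 D2 i \<chi>) (upd_push D1 D2 i \<chi>))"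
proof (induction \<chi> arbitrary: i)
  case FTop
  have "derivable L (FUpd D1 D2 i FTop)"
    using D FTop by (intro derivable.ax8nec derivable.taut) (auto simp: ptaut_def)
  then show ?case
    by (rule derivable_ptaut_mp) (auto simp: ptaut_def D FTop)
next
  case (FAt p)
  then show ?case
    using derivable_FIff_upd_push_FAt[OF D] by simp
next
  case (FNeg a)
  with D have ax: "derivable L (FIff (FUpd D1 D2 i (FNeg a)) (FNeg (FUpd D1 D2 i a)))"
    by (intro derivable.ax4neg) (auto simp: basic_wf_fm)
  from FNeg have "derivable L (FIff (FUpd D1 D2 i a) (upd_push D1 D2 i a))"
    by simp
  then show ?case
    using derivable_FIff_trans[OF ax derivable_FIff_FNeg] by simp
next
  case (FAnd a b)
  with D have ax: "derivable L (FIff (FUpd D1 D2 i (FAnd a b)) (FAnd (FUpd D1 D2 i a) (FUpd D1 D2 i b)))"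
    by (intro derivable.ax5and) (auto simp: basic_wf_fm)
  from FAnd have "derivable L (FIff (FUpd D1 D2 i a) (upd_push D1 D2 i a))"
    and "derivable L (FIff (FUpd D1 D2 i b) (upd_push D1 D2 i b))"
    by simp_all
  then show ?case
    using derivable_FIff_trans[OF ax derivable_FIff_FAnd] by simp
next
  case (FBox a)
  with D have ax: "derivable L (FIff (FUpd D1 D2 i (FBox a))
      (FBox (FAnd (FUpd D1 D2 0 a) (FAnd (FUpd D1 D2 1 a) (FUpd D1 D2 2 a)))))"
    by (intro derivable.ax6box) (auto simp: basic_wf_fm)
  from FBox have IH: "derivable L (FIff (FUpd D1 D2 k a) (upd_push D1 D2 k a))"
    if "k \<le> 2" for k
    using that by simp
  have "derivable L (FIff (FAnd (FUpd D1 D2 0 a) (FAnd (FUpd D1 D2 1 a) (FUpd D1 D2 2 a)))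
      (FAnd (upd_push D1 D2 0 a) (FAnd (upd_push D1 D2 1 a) (upd_push D1 D2 2 a))))"
    by (intro derivable_FIff_FAnd IH) simp_all
  then have "derivable L (FIff (FUpd D1 D2 i (FBox a)) (FBox
      (FAnd (upd_push D1 D2 0 a) (FAnd (upd_push D1 D2 1 a) (upd_push D1 D2 2 a)))))"
    by (intro derivable_FIff_trans[OF ax] derivable_FIff_FBox)
  then show ?case
    by simp
qed auto

lemma derivable_FIff_FDag:
  assumes "wf_fm a"
    and "\<And>D1 D2. D1 \<in> Cl \<pi> \<Longrightarrow> D2 \<in> Cl (PNeg \<pi>) \<Longrightarrow> derivable L (FIff (FUpd D1 D2 0 a) (g D1 D2))"
  shows "derivable L (FIff (FDag \<pi> a) (conj_list (map (\<lambda>(D1, D2). g D1 D2) (Cl_pairs \<pi>))))"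
proof (rule derivable_FIff_trans)
  show "derivable L (FIff (FDag \<pi> a) (conj_list (map (\<lambda>(D1, D2). FUpd D1 D2 0 a) (Cl_pairs \<pi>))))"
    using assms(1) by (intro derivable.ax1 set_Cl_pairs)
  show "derivable L (FIff (conj_list (map (\<lambda>(D1, D2). FUpd D1 D2 0 a) (Cl_pairs \<pi>)))
      (conj_list (map (\<lambda>(D1, D2). g D1 D2) (Cl_pairs \<pi>))))"
    using assms(2) by (intro derivable_FIff_conj_list) (auto simp: set_Cl_pairs)
qed

lemma derivable_FIff_reduce: "wf_fm \<phi> \<Longrightarrow> derivable L (FIff \<phi> (reduce \<phi>))"
proof (induction \<phi>)
  case (FUpd D1 D2 i a)
  have "derivable L (FIff (FUpd D1 D2 i a) (upd_push D1 D2 i (reduce a)))"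
  proof (rule derivable_FIff_trans)
    show "derivable L (FIff (FUpd D1 D2 i a) (FUpd D1 D2 i (reduce a)))"
      using FUpd by (intro derivable_FIff_FUpd) auto
    show "derivable L (FIff (FUpd D1 D2 i (reduce a)) (upd_push D1 D2 i (reduce a)))"
      using FUpd.prems by (intro derivable_FIff_upd_push basic_reduce) auto
  qed
  then show ?case
    by simp
next
  case (FDag \<pi> a)
  have "derivable L (FIff (FUpd D1 D2 0 a) (upd_push D1 D2 0 (reduce a)))"
    if "D1 \<in> Cl \<pi>" "D2 \<in> Cl (PNeg \<pi>)" for D1 D2
  proof (rule derivable_FIff_trans)
    show "derivable L (FIff (FUpd D1 D2 0 a) (FUpd D1 D2 0 (reduce a)))"
      using that FDag by (intro derivable_FIff_FUpd wf_clause_if_Cl) auto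
    show "derivable L (FIff (FUpd D1 D2 0 (reduce a)) (upd_push D1 D2 0 (reduce a)))"
      using that by (intro derivable_FIff_upd_push basic_reduce wf_clause_if_Cl) auto
  qed
  with FDag.prems show ?case
    using derivable_FIff_FDag[of a \<pi> L "\<lambda>D1 D2. upd_push D1 D2 0 (reduce a)"] by simp
qed (simp_all add: derivable_FIff_refl derivable_FIff_FNeg derivable_FIff_FAnd derivable_FIff_FBox)

section \<open>Canonical model for the basic modal language\<close>

text \<open>A copy of the basic modal formulas; unlike \<open>fm\<close>, whose update operators carry sets of
  literals, it is countable.\<close>

datatype 'a mfm = MTop | MAt 'a | MNeg "'a mfm" | MAnd "'a mfm" "'a mfm" | MBox "'a mfm"

instance mfm :: (countable) countable
  by countable_datatype

fun fm_of_mfm :: "'a mfm \<Rightarrow> 'a fm" where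
  "fm_of_mfm MTop = FTop"
| "fm_of_mfm (MAt p) = FAt p"
| "fm_of_mfm (MNeg a) = FNeg (fm_of_mfm a)"
| "fm_of_mfm (MAnd a b) = FAnd (fm_of_mfm a) (fm_of_mfm b)"
| "fm_of_mfm (MBox a) = FBox (fm_of_mfm a)"

fun mfm_of_fm :: "'a fm \<Rightarrow> 'a mfm" where
  "mfm_of_fm (FAt p) = MAt p"
| "mfm_of_fm (FNeg a) = MNeg (mfm_of_fm a)"
| "mfm_of_fm (FAnd a b) = MAnd (mfm_of_fm a) (mfm_of_fm b)"
| "mfm_of_fm (FBox a) = MBox (mfm_of_fm a)"
| "mfm_of_fm _ = MTop"

lemma fm_of_mfm_of_fm: "basic \<phi> \<Longrightarrow> fm_of_mfm (mfm_of_fm \<phi>) = \<phi>"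
  by (induction \<phi>) auto

definition consistent :: "logic \<Rightarrow> 'a fm set \<Rightarrow> bool" where
  "consistent L S \<longleftrightarrow> (\<forall>xs. set xs \<subseteq> S \<longrightarrow> \<not> derivable L (FNeg (conj_list xs)))"

definition mcs :: "logic \<Rightarrow> 'a fm set \<Rightarrow> bool" where
  "mcs L G \<longleftrightarrow> G \<subseteq> Collect basic \<and> consistent L G \<and> (\<forall>\<phi>. basic \<phi> \<longrightarrow> \<phi> \<in> G \<or> FNeg \<phi> \<in> G)"

lemma inconsistent_insert:
  assumes "\<not> consistent L (insert \<phi> S)" "S \<subseteq> Collect basic" "basic \<phi>"
  obtains ys where "set ys \<subseteq> S" "derivable L (FNeg (FAnd \<phi> (conj_list ys)))"
proof -
  obtain xs where xs: "set xs \<subseteq> insert \<phi> S" "derivable L (FNeg (conj_list xs))"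
    using assms(1) by (auto simp: consistent_def)
  let ?ys = "filter (\<lambda>x. x \<noteq> \<phi>) xs"
  have "derivable L (FNeg (FAnd \<phi> (conj_list ?ys)))"
    by (rule derivable_ptaut_mp[OF xs(2)]) (use xs assms in \<open>auto simp: ptaut_def basic_wf_fm\<close>)
  moreover have "set ?ys \<subseteq> S"
    using xs(1) by auto
  ultimately show thesis
    using that by blast
qed

lemma consistent_insert_or_insert_FNeg:
  assumes "consistent L S" "S \<subseteq> Collect basic" "basic \<phi>"
  shows "consistent L (insert \<phi> S) \<or> consistent L (insert (FNeg \<phi>) S)"
proof (rule ccontr)
  assume "\<not> ?thesis"
  then have "\<not> consistent L (insert \<phi> S)" "\<not> consistent L (insert (FNeg \<phi>) S)"
    by auto
  obtain ys1 where ys1: "set ys1 \<subseteq> S" "derivable L (FNeg (FAnd \<phi> (conj_list ys1)))"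
    by (rule inconsistent_insert[OF \<open>\<not> consistent L (insert \<phi> S)\<close> assms(2,3)])
  obtain ys2 where ys2: "set ys2 \<subseteq> S" "derivable L (FNeg (FAnd (FNeg \<phi>) (conj_list ys2)))"
    by (rule inconsistent_insert[OF \<open>\<not> consistent L (insert (FNeg \<phi>) S)\<close> assms(2)])
      (use assms(3) in simp)
  have "derivable L (FNeg (conj_list (ys1 @ ys2)))"
    by (rule derivable_ptaut_mp2[OF ys1(2) ys2(2)])
      (use ys1(1) ys2(1) assms(2) in \<open>auto simp: ptaut_def basic_wf_fm\<close>)
  with ys1(1) ys2(1) assms(1) show False
    by (auto simp: consistent_def)
qed

lemma consistent_Union_chain:
  assumes "C \<noteq> {}" "subset.chain A C" "\<And>T. T \<in> C \<Longrightarrow> consistent L T"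
  shows "consistent L (\<Union>C)"
  unfolding consistent_def
proof (intro allI impI)
  fix xs
  assume "set xs \<subseteq> \<Union>C"
  then obtain T where "T \<in> C" "set xs \<subseteq> T"
    using finite_subset_Union_chain[of "set xs" C A] assms(1,2) by auto
  with assms(3) show "\<not> derivable L (FNeg (conj_list xs))"
    by (auto simp: consistent_def)
qed

lemma lindenbaum:
  assumes "consistent L S" "S \<subseteq> Collect basic"
  obtains G where "mcs L G" "S \<subseteq> G"
proof -
  let ?A = "{T. S \<subseteq> T \<and> T \<subseteq> Collect basic \<and> consistent L T}"
  have "\<exists>M\<in>?A. \<forall>X\<in>?A. M \<subseteq> X \<longrightarrow> X = M"
  proof (rule subset_Zorn_nonempty)
    show "?A \<noteq> {}"
      using assms by blast
  next
    fix C
    assume C: "C \<noteq> {}" "subset.chain ?A C"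
    then have "consistent L (\<Union>C)"
      by (rule consistent_Union_chain) (use C(2) in \<open>auto simp: subset.chain_def\<close>)
    with C show "\<Union>C \<in> ?A"
      by (auto simp: subset.chain_def)
  qed
  then obtain M where M: "M \<in> ?A" and max: "\<forall>X\<in>?A. M \<subseteq> X \<longrightarrow> X = M"
    by blast
  have "\<phi> \<in> M \<or> FNeg \<phi> \<in> M" if \<phi>: "basic \<phi>" for \<phi>
  proof -
    have "insert \<phi> M \<in> ?A \<or> insert (FNeg \<phi>) M \<in> ?A"
      using consistent_insert_or_insert_FNeg[of L M \<phi>] M \<phi> by auto
    with max show ?thesis
      by blast
  qed
  with M have "mcs L M"
    by (auto simp: mcs_def)
  with M show thesis
    by (intro that) auto
qed

lemma mcs_basic: "mcs L G \<Longrightarrow> \<phi> \<in> G \<Longrightarrow> basic \<phi>"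
  by (auto simp: mcs_def)

lemma mcs_derivable_imp:
  assumes G: "mcs L G" and "set xs \<subseteq> G" "derivable L (FImp (conj_list xs) \<phi>)" "basic \<phi>"
  shows "\<phi> \<in> G"
proof (rule ccontr)
  assume "\<phi> \<notin> G"
  with G assms(4) have "set (FNeg \<phi> # xs) \<subseteq> G"
    using assms(2) by (auto simp: mcs_def)
  moreover have "derivable L (FNeg (conj_list (FNeg \<phi> # xs)))"
    by (rule derivable_ptaut_mp[OF assms(3)])
      (use derivable_wf_fm[OF assms(3)] assms(4) in \<open>auto simp: ptaut_def basic_wf_fm\<close>)
  ultimately show False
    using G unfolding mcs_def consistent_def by blast
qed

lemma mcs_derivable: "mcs L G \<Longrightarrow> derivable L \<phi> \<Longrightarrow> basic \<phi> \<Longrightarrow> \<phi> \<in> G"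
  by (rule mcs_derivable_imp[of L G "[]"]) (auto intro: derivable_ptaut_mp simp: ptaut_def basic_wf_fm)

lemma mcs_FNeg_notin: "mcs L G \<Longrightarrow> \<phi> \<in> G \<Longrightarrow> FNeg \<phi> \<notin> G"
proof
  assume G: "mcs L G" and "\<phi> \<in> G" "FNeg \<phi> \<in> G"
  then have "set [\<phi>, FNeg \<phi>] \<subseteq> G"
    by simp
  moreover have "derivable L (FNeg (conj_list [\<phi>, FNeg \<phi>]))"
    using mcs_basic[OF G \<open>\<phi> \<in> G\<close>] by (intro derivable.taut) (auto simp: ptaut_def basic_wf_fm)
  ultimately show False
    using G unfolding mcs_def consistent_def by blast
qed

lemma mcs_FNeg: "mcs L G \<Longrightarrow> basic \<phi> \<Longrightarrow> FNeg \<phi> \<in> G \<longleftrightarrow> \<phi> \<notin> G"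
  using mcs_FNeg_notin by (auto simp: mcs_def)

lemma mcs_ptaut_imp:
  assumes G: "mcs L G" and "set xs \<subseteq> G" "ptaut (FImp (conj_list xs) \<phi>)" "basic \<phi>"
  shows "\<phi> \<in> G"
proof (rule mcs_derivable_imp[OF G assms(2) derivable.taut assms(4)])
  show "wf_fm (FImp (conj_list xs) \<phi>)"
    using assms mcs_basic[OF G] by (auto intro: basic_wf_fm)
qed (fact assms(3))

lemma mcs_FAnd:
  assumes G: "mcs L G" and "basic a" "basic b"
  shows "FAnd a b \<in> G \<longleftrightarrow> a \<in> G \<and> b \<in> G"
proof safe
  assume "FAnd a b \<in> G"
  then have "set [FAnd a b] \<subseteq> G"
    by simp
  from mcs_ptaut_imp[OF G this] assms(2,3) show "a \<in> G" "b \<in> G"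
    by (simp_all add: ptaut_def)
next
  assume "a \<in> G" "b \<in> G"
  then have "set [a, b] \<subseteq> G"
    by simp
  from mcs_ptaut_imp[OF G this] assms(2,3) show "FAnd a b \<in> G"
    by (simp add: ptaut_def)
qed

lemma mcs_mp: "mcs L G \<Longrightarrow> FImp a b \<in> G \<Longrightarrow> a \<in> G \<Longrightarrow> basic b \<Longrightarrow> b \<in> G"
  by (rule mcs_ptaut_imp[of L G "[FImp a b, a]"]) (auto simp: ptaut_def)

definition canon_rel :: "logic \<Rightarrow> ('a fm set \<times> 'a fm set) set" where
  "canon_rel L = {(G, D). mcs L G \<and> mcs L D \<and> (\<forall>\<chi>. FBox \<chi> \<in> G \<longrightarrow> \<chi> \<in> D)}"

lemma canon_rel_witness:
  assumes G: "mcs L G" and "basic \<psi>" "FBox \<psi> \<notin> G"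
  shows "\<exists>D. (G, D) \<in> canon_rel L \<and> \<psi> \<notin> D"
proof -
  let ?S = "insert (FNeg \<psi>) {\<chi>. FBox \<chi> \<in> G}"
  have S: "?S \<subseteq> Collect basic"
    using G assms(2) by (auto simp: mcs_def)
  have "consistent L ?S"
    unfolding consistent_def
  proof (intro allI impI notI)
    fix xs
    assume xs: "set xs \<subseteq> ?S" and "derivable L (FNeg (conj_list xs))"
    let ?ys = "filter (\<lambda>x. x \<noteq> FNeg \<psi>) xs"
    have ys: "\<forall>y\<in>set ?ys. FBox y \<in> G" and wf: "\<forall>y\<in>set ?ys. wf_fm y"
      using xs G by (auto simp: mcs_def basic_wf_fm)
    have "derivable L (FImp (conj_list ?ys) \<psi>)"
      by (rule derivable_ptaut_mp[OF \<open>derivable L (FNeg (conj_list xs))\<close>])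
        (use wf assms(2) basic_wf_fm in \<open>auto simp: ptaut_def\<close>)
    then have "derivable L (FImp (FBox (conj_list ?ys)) (FBox \<psi>))"
      by (rule derivable_FImp_FBox)
    then have "derivable L (FImp (conj_list (map FBox ?ys)) (FBox \<psi>))"
      by (rule derivable_ptaut_mp2[OF derivable_conj_list_FBox[OF wf]])
        (use wf assms(2) basic_wf_fm in \<open>auto simp: ptaut_def\<close>)
    with ys assms(2) have "FBox \<psi> \<in> G"
      by (intro mcs_derivable_imp[OF G]) auto
    with assms(3) show False
      by simp
  qed
  from this S obtain D where "mcs L D" "?S \<subseteq> D"
    by (rule lindenbaum)
  with G show ?thesis
    using mcs_FNeg_notin[of L D \<psi>] by (auto simp: canon_rel_def)
qed

lemma canon_rel_refl:
  assumes "L \<in> {LT, LS4, LS5}" "mcs L G"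
  shows "(G, G) \<in> canon_rel L"
proof -
  have "\<chi> \<in> G" if "FBox \<chi> \<in> G" for \<chi>
  proof -
    have "basic \<chi>"
      using mcs_basic[OF assms(2) that] by simp
    with assms have "FImp (FBox \<chi>) \<chi> \<in> G"
      by (intro mcs_derivable derivable.axT) (auto simp: basic_wf_fm)
    from assms(2) this that \<open>basic \<chi>\<close> show ?thesis
      by (rule mcs_mp)
  qed
  with assms(2) show ?thesis
    by (auto simp: canon_rel_def)
qed

lemma canon_rel_trans:
  assumes "L \<in> {LK4, LS4, LS5}" "(G, D) \<in> canon_rel L" "(D, E) \<in> canon_rel L"
  shows "(G, E) \<in> canon_rel L"
proof -
  have G: "mcs L G"
    using assms(2) by (simp add: canon_rel_def)
  have "\<chi> \<in> E" if "FBox \<chi> \<in> G" for \<chi>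
  proof -
    have "basic \<chi>"
      using mcs_basic[OF G that] by simp
    with assms(1) G have "FImp (FBox \<chi>) (FBox (FBox \<chi>)) \<in> G"
      by (intro mcs_derivable derivable.ax4) (auto simp: basic_wf_fm)
    from mcs_mp[OF G this that] \<open>basic \<chi>\<close> have "FBox (FBox \<chi>) \<in> G"
      by simp
    with assms(2,3) show ?thesis
      by (auto simp: canon_rel_def)
  qed
  with assms(2,3) show ?thesis
    by (auto simp: canon_rel_def)
qed

lemma canon_rel_euclidean:
  assumes "L \<in> {LK5, LS5}" "(G, D) \<in> canon_rel L" "(G, E) \<in> canon_rel L"
  shows "(D, E) \<in> canon_rel L"
proof -
  have G: "mcs L G" and D: "mcs L D"
    using assms(2) by (simp_all add: canon_rel_def)
  have "\<chi> \<in> E" if "FBox \<chi> \<in> D" for \<chi>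
  proof (rule ccontr)
    assume "\<chi> \<notin> E"
    have "basic \<chi>"
      using mcs_basic[OF D that] by simp
    from \<open>\<chi> \<notin> E\<close> assms(3) have neg: "FNeg (FBox \<chi>) \<in> G"
      using mcs_FNeg[OF G] \<open>basic \<chi>\<close> by (auto simp: canon_rel_def)
    from assms(1) G \<open>basic \<chi>\<close> have "FImp (FNeg (FBox \<chi>)) (FBox (FNeg (FBox \<chi>))) \<in> G"
      by (intro mcs_derivable derivable.ax5) (auto simp: basic_wf_fm)
    from mcs_mp[OF G this neg] \<open>basic \<chi>\<close> have "FBox (FNeg (FBox \<chi>)) \<in> G"
      by simp
    with assms(2) have "FNeg (FBox \<chi>) \<in> D"
      by (auto simp: canon_rel_def)
    with mcs_FNeg_notin[OF D that] show False
      by contradiction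
  qed
  with assms(2,3) show ?thesis
    by (auto simp: canon_rel_def)
qed

text \<open>Only the worlds reachable from \<open>G0\<close> by iterated choices of \<open>box_witness\<close> are kept, which
  makes the canonical model countable.\<close>

definition box_witness :: "logic \<Rightarrow> 'a fm set \<Rightarrow> 'a fm \<Rightarrow> 'a fm set" where
  "box_witness L G \<psi> =
    (if mcs L G \<and> basic \<psi> \<and> FBox \<psi> \<notin> G then SOME D. (G, D) \<in> canon_rel L \<and> \<psi> \<notin> D else G)"

lemma box_witness:
  assumes "mcs L G" "basic \<psi>" "FBox \<psi> \<notin> G"
  shows "(G, box_witness L G \<psi>) \<in> canon_rel L" "\<psi> \<notin> box_witness L G \<psi>"
  using someI_ex[OF canon_rel_witness[OF assms]] assms by (simp_all add: box_witness_def)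

lemma mcs_box_witness: "mcs L G \<Longrightarrow> mcs L (box_witness L G \<psi>)"
  using box_witness(1)[of L G \<psi>] by (auto simp: box_witness_def canon_rel_def)

definition canon_worlds :: "logic \<Rightarrow> ('a::countable) fm set \<Rightarrow> 'a fm set set" where
  "canon_worlds L G0 = range (\<lambda>ms :: 'a mfm list. foldl (box_witness L) G0 (map fm_of_mfm ms))"

lemma mcs_canon_worlds: "mcs L G0 \<Longrightarrow> G \<in> canon_worlds L G0 \<Longrightarrow> mcs L G"
proof -
  have "mcs L (foldl (box_witness L) G0 xs)" if "mcs L G0" for G0 and xs :: "'a fm list"
    using that by (induction xs arbitrary: G0) (auto simp: mcs_box_witness)
  then show "mcs L G0 \<Longrightarrow> G \<in> canon_worlds L G0 \<Longrightarrow> mcs L G"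
    by (auto simp: canon_worlds_def)
qed

lemma start_in_canon_worlds: "G0 \<in> canon_worlds L G0"
  unfolding canon_worlds_def by (rule range_eqI[of _ _ "[]"]) simp

lemma box_witness_in_canon_worlds:
  assumes "G \<in> canon_worlds L G0" "basic \<psi>"
  shows "box_witness L G \<psi> \<in> canon_worlds L G0"
proof -
  obtain ms where "G = foldl (box_witness L) G0 (map fm_of_mfm ms)"
    using assms(1) by (auto simp: canon_worlds_def)
  with assms(2) have "box_witness L G \<psi> = foldl (box_witness L) G0 (map fm_of_mfm (ms @ [mfm_of_fm \<psi>]))"
    by (simp add: fm_of_mfm_of_fm)
  then show ?thesis
    unfolding canon_worlds_def by blast
qed

lemma countable_canon_worlds: "countable (canon_worlds L G0)"
  unfolding canon_worlds_def by simp

lemma frame_cond_pullback: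
  assumes "frame_cond L W R" "f ` U \<subseteq> W"
  shows "frame_cond L U {(u, v). u \<in> U \<and> v \<in> U \<and> (f u, f v) \<in> R}" (is "frame_cond L U ?R")
proof -
  have "refl_on U ?R" if "refl_on W R"
    using that assms(2) unfolding refl_on_def by blast
  moreover have "trans ?R" if "trans R"
    using that unfolding trans_def by blast
  moreover have "euclidean ?R" if "euclidean R"
    using that unfolding euclidean_def by blast
  moreover have "sym ?R" if "sym R"
    using that unfolding sym_def by blast
  moreover have "?R \<subseteq> U \<times> U"
    by auto
  ultimately show ?thesis
    using assms(1) by (cases L) (simp_all add: equiv_def)
qed

lemma frame_cond_canon_rel: "frame_cond L (Collect (mcs L)) (canon_rel L)"
proof -
  have "canon_rel L \<subseteq> Collect (mcs L) \<times> Collect (mcs L)"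
    by (auto simp: canon_rel_def)
  moreover have refl: "refl_on (Collect (mcs L)) (canon_rel L)" if "L \<in> {LT, LS4, LS5}"
    using canon_rel_refl[OF that] by (auto simp: refl_on_def)
  moreover have "trans (canon_rel L)" if "L \<in> {LK4, LS4, LS5}"
    using that by (metis canon_rel_trans transI)
  moreover have "euclidean (canon_rel L)" if "L \<in> {LK5, LS5}"
    using that unfolding euclidean_def by (metis canon_rel_euclidean)
  moreover have "sym (canon_rel L)" if "L = LS5"
  proof (rule symI)
    fix G D
    assume GD: "(G, D) \<in> canon_rel L"
    with that have "(G, G) \<in> canon_rel L"
      by (intro canon_rel_refl) (auto simp: canon_rel_def)
    with GD that show "(D, G) \<in> canon_rel L"
      using canon_rel_euclidean[of L G D G] by simp
  qed
  ultimately show ?thesis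
    by (cases L) (simp_all add: equiv_def)
qed

text \<open>Worlds have to be drawn from an arbitrary type, so the canonical model is pulled back along
  a map \<open>f\<close> onto maximal consistent sets.\<close>

definition canon_model :: "logic \<Rightarrow> 'w set \<Rightarrow> ('w \<Rightarrow> 'a fm set) \<Rightarrow> ('w, 'a) model" where
  "canon_model L U f =
    (U, {(u, v). u \<in> U \<and> v \<in> U \<and> (f u, f v) \<in> canon_rel L}, \<lambda>p. {u \<in> U. FAt p \<in> f u})"

lemma L_model_canon_model:
  assumes "U \<noteq> {}" "f ` U \<subseteq> Collect (mcs L)"
  shows "L_model L (canon_model L U f)"
  using assms frame_cond_pullback[OF frame_cond_canon_rel assms(2)]
  by (auto simp: L_model_def is_model_def canon_model_def)

lemma truth_lemma:
  assumes f: "f ` U = canon_worlds L G0" and G0: "mcs L G0" and "basic \<psi>" "u \<in> U"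
  shows "sats (canon_model L U f) u \<psi> \<longleftrightarrow> \<psi> \<in> f u"
proof -
  have mcs_f: "mcs L (f u)" if "u \<in> U" for u
    using that f mcs_canon_worlds[OF G0] by blast
  show ?thesis
    using assms(3,4)
  proof (induction \<psi> arbitrary: u)
    case FTop
    have "derivable L FTop"
      by (rule derivable.taut) (auto simp: ptaut_def)
    with mcs_f[OF FTop(2)] have "FTop \<in> f u"
      by (rule mcs_derivable) simp
    then show ?case
      by (simp add: sats_def)
  next
    case (FAt p)
    then show ?case
      by (simp add: sats_def canon_model_def atv_def)
  next
    case (FNeg a)
    then show ?case
      using mcs_FNeg[OF mcs_f] by (simp add: sats_def)
  next
    case (FAnd a b)
    then show ?case
      using mcs_FAnd[OF mcs_f] by (simp add: sats_def)
  next
    case (FBox a)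
    then have G: "f u \<in> canon_worlds L G0" and "basic a"
      using f by auto
    have "sats (canon_model L U f) u (FBox a) \<longleftrightarrow>
        (\<forall>v\<in>U. (f u, f v) \<in> canon_rel L \<longrightarrow> sats (canon_model L U f) v a)"
      using FBox.prems by (auto simp: sats_def canon_model_def)
    also have "\<dots> \<longleftrightarrow> (\<forall>D\<in>canon_worlds L G0. (f u, D) \<in> canon_rel L \<longrightarrow> a \<in> D)"
      unfolding f[symmetric] using FBox.IH[OF \<open>basic a\<close>] by auto
    also have "\<dots> \<longleftrightarrow> FBox a \<in> f u"
      using box_witness[OF mcs_f[OF FBox(3)] \<open>basic a\<close>] box_witness_in_canon_worlds[OF G \<open>basic a\<close>]
      by (auto simp: canon_rel_def)
    finally show ?case .
  qed auto
qed

theorem derivable_if_valid_basic: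
  fixes \<psi> :: "('a::countable) fm"
  assumes "infinite (UNIV :: 'w set)" "basic \<psi>" "valid L TYPE('w) \<psi>"
  shows "derivable L \<psi>"
proof (rule ccontr)
  assume "\<not> derivable L \<psi>"
  then have "consistent L {FNeg \<psi>}"
    using assms(2) by (auto simp: consistent_def subset_singleton_iff
        intro: derivable_ptaut_mp simp: ptaut_def basic_wf_fm)
  then obtain G0 where G0: "mcs L G0" "FNeg \<psi> \<in> G0"
    using assms(2) by (auto elim: lindenbaum)
  let ?W = "canon_worlds L G0"
  obtain g :: "nat \<Rightarrow> 'w" where "inj g"
    using infinite_countable_subset[OF assms(1)] by auto
  define f where "f = from_nat_into ?W \<circ> inv g"
  have f: "f ` range g = ?W"
    using \<open>inj g\<close> range_from_nat_into[OF _ countable_canon_worlds] start_in_canon_worlds[of G0 L]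
    by (auto simp: f_def image_comp)
  then obtain u where u: "u \<in> range g" "f u = G0"
    using start_in_canon_worlds[of G0 L] by (metis imageE)
  have "L_model L (canon_model L (range g) f)"
    using f mcs_canon_worlds[OF G0(1)] by (intro L_model_canon_model) auto
  with assms(3) u(1) have "sats (canon_model L (range g) f) u \<psi>"
    by (auto simp: valid_def canon_model_def)
  with truth_lemma[OF f G0(1) assms(2) u(1)] u(2) have "\<psi> \<in> G0"
    by simp
  with G0 show False
    using mcs_FNeg_notin by blast
qed

lemma valid_cong:
  assumes "derivable L (FIff \<phi> \<psi>)"
  shows "valid L TYPE('w) \<phi> \<longleftrightarrow> valid L TYPE('w) \<psi>"
  using sat_if_derivable[OF assms] by (fastforce simp: valid_def sats_def)

theorem theorem2:
  fixes L :: logic and \<phi> :: "('a::countable) fm"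
  assumes "wf_fm \<phi>" and "infinite (UNIV :: 'w set)"
  shows "(valid L TYPE('w) \<phi> \<longleftrightarrow> derivable L \<phi>)
       \<and> (derivable L \<phi> \<longrightarrow> valid L TYPE('v) \<phi>)"
proof -
  have red: "derivable L (FIff \<phi> (reduce \<phi>))"
    using assms(1) by (rule derivable_FIff_reduce)
  have "valid L TYPE('w) \<phi> \<longleftrightarrow> valid L TYPE('w) (reduce \<phi>)"
    using red by (rule valid_cong)
  also have "\<dots> \<longleftrightarrow> derivable L (reduce \<phi>)"
    using derivable_if_valid_basic[OF assms(2) basic_reduce] valid_if_derivable by blast
  also have "\<dots> \<longleftrightarrow> derivable L \<phi>"
    using derivable_FIff_cong[OF red] by simp
  finally show ?thesis
    using valid_if_derivable by blast
qed

end
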